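(* Let $k\ge2$ be an integer, let $H=(V,\mathcal E)$ be a hypergraph with $n$ vertices that is hereditarily $k$-colorable, and set $\lambda:=\frac{k}{k-1}$. Let $\mathcal L=\{L_v\}_{v\in V}$ be a family of sets of positive integers with $|L_v|>\log_\lambda n$ for every $v\in V$. Then $H$ admits a unique-maximum coloring from $\mathcal L$.
   Context: A hypergraph $H=(V,\mathcal E)$ has finite vertex set $V$ and nonempty hyperedges. A coloring $C\colon V\to\mathbb Z_{>0}$ is proper if every hyperedge with at least two vertices is non-monochromatic; it is unique-maximum if in every hyperedge $S$ the color $\max_{v\in S}C(v)$ is attained by exactly one vertex of $S$. For $V'\subseteq V$, $H[V']=(V',\{S\cap V': S\in\mathcal E\})$. $H$ is hereditarily $k$-colorable if every $H[V']$ admits a proper coloring with at most $k$ colors. $H$ admits a coloring from $\mathcal L$ if $C(v)\in L_v$ for all $v$. *)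

theory Defs
  imports Complex_Main
begin

definition hypergraph :: "'a set \<Rightarrow> 'a set set \<Rightarrow> bool" where
  "hypergraph V E \<longleftrightarrow> finite V \<and> (\<forall>S\<in>E. S \<noteq> {} \<and> S \<subseteq> V)"

definition induced_edges :: "'a set set \<Rightarrow> 'a set \<Rightarrow> 'a set set" where
  "induced_edges E V' = {S \<inter> V' | S. S \<in> E}"

definition proper_coloring :: "'a set \<Rightarrow> 'a set set \<Rightarrow> ('a \<Rightarrow> nat) \<Rightarrow> bool" where
  "proper_coloring V E C \<longleftrightarrow> (\<forall>v\<in>V. C v > 0) \<and>
     (\<forall>S\<in>E. card S \<ge> 2 \<longrightarrow> (\<exists>u\<in>S. \<exists>w\<in>S. C u \<noteq> C w))"

definition unique_max_coloring :: "'a set \<Rightarrow> 'a set set \<Rightarrow> ('a \<Rightarrow> nat) \<Rightarrow> bool" where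
  "unique_max_coloring V E C \<longleftrightarrow> (\<forall>v\<in>V. C v > 0) \<and>
     (\<forall>S\<in>E. S \<noteq> {} \<longrightarrow> card {v\<in>S. C v = Max (C ` S)} = 1)"

definition hereditarily_colorable :: "nat \<Rightarrow> 'a set \<Rightarrow> 'a set set \<Rightarrow> bool" where
  "hereditarily_colorable k V E \<longleftrightarrow>
     (\<forall>V'\<subseteq>V. \<exists>C. proper_coloring V' (induced_edges E V') C \<and> card (C ` V') \<le> k)"

end

theory Submission
  imports Defs
begin

(* Proof idea (a weighted greedy argument in the style of Erdos-Selfridge).
   Give a list A of colours the weight r^|A| with r = (k-1)/k (weight 0 if A is infinite).
   The bound |L v| > log_lambda n makes every weight smaller than 1/n, so the total
   weight of the lists is below 1.  We then prove by induction on the vertex set W that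
   total weight < 1 suffices for a list colouring that is unique-maximum on H[W]:
   let c be the smallest colour in any list and V_c the vertices whose list contains c.
   A proper k-colouring of H[V_c] has a colour class X carrying at least a 1/k share of
   the weight of V_c.  Colour X with c, delete c from all other lists and recurse on W - X;
   the weight does not increase.  All recursively chosen colours exceed c, and X is
   independent in H[W], so the combined colouring is still unique-maximum. *)

definition list_weight :: "nat \<Rightarrow> nat set \<Rightarrow> real" where
  "list_weight k A = (if finite A then ((real k - 1) / real k) ^ card A else 0)"

lemma list_weight_nonneg: "k \<ge> 1 \<Longrightarrow> list_weight k A \<ge> 0"
  unfolding list_weight_def by auto

lemma list_weight_empty: "list_weight k {} = 1"
  unfolding list_weight_def by simp

lemma list_weight_remove:
  assumes "c \<in> A"
  shows "list_weight k A = ((real k - 1) / real k) * list_weight k (A - {c})"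
proof (cases "finite A")
  case True
  then have "card A = Suc (card (A - {c}))"
    using assms by (metis card_Suc_Diff1)
  then show ?thesis using True unfolding list_weight_def by simp
qed (simp add: list_weight_def)

lemma list_weight_less_of_log_bound:
  assumes "k \<ge> 2" "n > 0"
    and long: "infinite A \<or> real (card A) > log (real k / (real k - 1)) (real n)"
  shows "list_weight k A < 1 / real n"
proof (cases "finite A")
  case True
  define lam :: real where "lam = real k / (real k - 1)"
  have lam_gt1: "lam > 1" using assms(1) unfolding lam_def by (simp add: field_simps)
  have "log lam (real n) < real (card A)" using long True unfolding lam_def by auto
  then have "real n < lam ^ card A"
    using log_less_iff[OF lam_gt1] assms(2) lam_gt1 by (simp add: powr_realpow)
  then have "1 / lam ^ card A < 1 / real n"
    using assms(2) by (simp add: frac_less2)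
  moreover have "(real k - 1) / real k = 1 / lam" unfolding lam_def by simp
  ultimately show ?thesis
    using True unfolding list_weight_def by (simp add: power_one_over)
qed (use assms(2) in \<open>simp add: list_weight_def\<close>)

lemma heavy_colour_class:
  fixes g :: "'a \<Rightarrow> real" and P :: "'a \<Rightarrow> 'b"
  assumes "finite A" "A \<noteq> {}" "\<forall>v\<in>A. g v \<ge> 0" "card (P ` A) \<le> k"
  shows "\<exists>j\<in>P ` A. sum g A \<le> real k * sum g {v\<in>A. P v = j}"
proof -
  define f where "f j = sum g {v\<in>A. P v = j}" for j
  have fin: "finite (P ` A)" "P ` A \<noteq> {}" using assms(1,2) by auto
  have "Max (f ` P ` A) \<in> f ` P ` A" using fin by simp
  then obtain j0 where j0: "j0 \<in> P ` A" "f j0 = Max (f ` P ` A)" by (metis imageE)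
  have "sum g A = (\<Sum>j\<in>P ` A. f j)"
    unfolding f_def using sum.image_gen[OF assms(1), of g P] by simp
  also have "\<dots> \<le> real (card (P ` A)) * f j0"
    by (rule sum_bounded_above) (use j0 fin in auto)
  also have "\<dots> \<le> real k * f j0"
    using assms(3,4) by (intro mult_right_mono) (auto simp: f_def intro: sum_nonneg)
  finally show ?thesis using j0(1) unfolding f_def by blast
qed

lemma weight_after_colouring_class:
  assumes "k \<ge> 2" "finite W"
    and X_sub: "X \<subseteq> {v\<in>W. c \<in> L v}"
    and heavy: "(\<Sum>v\<in>{v\<in>W. c \<in> L v}. list_weight k (L v)) \<le> real k * (\<Sum>v\<in>X. list_weight k (L v))"
  shows "(\<Sum>v\<in>W - X. list_weight k (L v - {c})) \<le> (\<Sum>v\<in>W. list_weight k (L v))"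
proof -
  define Vc where "Vc = {v\<in>W. c \<in> L v}"
  define w where "w v = list_weight k (L v)" for v
  define w' where "w' v = list_weight k (L v - {c})" for v
  define r :: real where "r = (real k - 1) / real k"
  have r_pos: "r > 0" using assms(1) unfolding r_def by auto
  have fin: "finite Vc" "Vc \<subseteq> W" "X \<subseteq> Vc" using assms(2) X_sub unfolding Vc_def by auto
  have outside: "(\<Sum>v\<in>W - Vc. w' v) = (\<Sum>v\<in>W - Vc. w v)"
    unfolding w_def w'_def Vc_def by (intro sum.cong) auto
  have inside: "r * (\<Sum>v\<in>Vc - X. w' v) = (\<Sum>v\<in>Vc - X. w v)"
    unfolding sum_distrib_left w_def w'_def r_def
    by (intro sum.cong refl list_weight_remove[symmetric]) (auto simp: Vc_def)
  have "(\<Sum>v\<in>Vc - X. w v) = (\<Sum>v\<in>Vc. w v) - (\<Sum>v\<in>X. w v)"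
    using sum.subset_diff[OF fin(3,1), of w] by simp
  also have "\<dots> \<le> r * (\<Sum>v\<in>Vc. w v)"
    using heavy assms(1) unfolding w_def Vc_def r_def by (simp add: field_simps)
  finally have "(\<Sum>v\<in>Vc - X. w' v) \<le> (\<Sum>v\<in>Vc. w v)"
    using inside r_pos mult_le_cancel_left_pos by metis
  moreover have "W - X = (W - Vc) \<union> (Vc - X)" "(W - Vc) \<inter> (Vc - X) = {}" using fin by auto
  ultimately show ?thesis
    using sum.union_disjoint[of "W - Vc" "Vc - X" w'] sum.subset_diff[OF fin(2) assms(2), of w]
      outside assms(2) fin(1)
    unfolding w_def[symmetric] w'_def[symmetric] by simp
qed

definition unique_max_on :: "'a set \<Rightarrow> 'a set set \<Rightarrow> ('a \<Rightarrow> nat) \<Rightarrow> bool" where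
  "unique_max_on W E C \<longleftrightarrow>
     (\<forall>S\<in>E. S \<inter> W \<noteq> {} \<longrightarrow> card {v\<in>S \<inter> W. C v = Max (C ` (S \<inter> W))} = 1)"

lemma colour_class_independent:
  assumes "proper_coloring U (induced_edges E U) P" "S \<in> E" "S \<inter> U \<subseteq> {v. P v = j}"
  shows "card (S \<inter> U) \<le> 1"
proof (rule ccontr)
  assume "\<not> card (S \<inter> U) \<le> 1"
  then have "card (S \<inter> U) \<ge> 2" by simp
  moreover have "S \<inter> U \<in> induced_edges E U" unfolding induced_edges_def using assms(2) by auto
  ultimately obtain u w where "u \<in> S \<inter> U" "w \<in> S \<inter> U" "P u \<noteq> P w"
    using assms(1) unfolding proper_coloring_def by blast
  then show False using assms(3) by auto
qed

lemma unique_max_on_extend: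
  assumes "finite W" "X \<subseteq> W" and um: "unique_max_on (W - X) E C'"
    and above: "\<forall>v\<in>W - X. C' v > c"
    and indep: "\<forall>S\<in>E. S \<inter> W \<subseteq> X \<longrightarrow> card (S \<inter> W) \<le> 1"
  shows "unique_max_on W E (\<lambda>v. if v \<in> X then c else C' v)" (is "unique_max_on W E ?C")
  unfolding unique_max_on_def
proof (intro ballI impI)
  fix S assume S: "S \<in> E" "S \<inter> W \<noteq> {}"
  show "card {v\<in>S \<inter> W. ?C v = Max (?C ` (S \<inter> W))} = 1"
  proof (cases "S \<inter> (W - X) = {}")
    case True
    then have "card (S \<inter> W) \<le> 1" using indep S(1) by blast
    moreover have "card (S \<inter> W) \<noteq> 0" using S(2) assms(1) by simp
    ultimately have "card (S \<inter> W) = 1" by linarith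
    then obtain x where "S \<inter> W = {x}" by (auto simp: card_Suc_eq)
    then have "{v\<in>S \<inter> W. ?C v = Max (?C ` (S \<inter> W))} = {x}" by auto
    then show ?thesis by simp
  next
    case False
    define M where "M = Max (C' ` (S \<inter> (W - X)))"
    have fin: "finite (S \<inter> (W - X))" using assms(1) by auto
    have M_in: "M \<in> C' ` (S \<inter> (W - X))" unfolding M_def using fin False by auto
    have M_above: "M > c" using M_in above by auto
    have M_ge: "C' v \<le> M" if "v \<in> S \<inter> (W - X)" for v unfolding M_def using fin that by auto
    have "Max (?C ` (S \<inter> W)) = M"
    proof (rule Max_eqI)
      show "finite (?C ` (S \<inter> W))" using assms(1) by auto
      show "y \<le> M" if "y \<in> ?C ` (S \<inter> W)" for y
        using that M_ge M_above by (auto split: if_splits)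
      show "M \<in> ?C ` (S \<inter> W)" using M_in by force
    qed
    then have "{v\<in>S \<inter> W. ?C v = Max (?C ` (S \<inter> W))} =
        {v\<in>S \<inter> (W - X). C' v = Max (C' ` (S \<inter> (W - X)))}"
      using M_above unfolding M_def by auto
    then show ?thesis using um S(1) False unfolding unique_max_on_def by simp
  qed
qed

lemma unique_max_list_colouring_of_weight:
  assumes k2: "k \<ge> 2" and hc: "hereditarily_colorable k V E"
  shows "finite W \<Longrightarrow> W \<subseteq> V \<Longrightarrow> (\<Sum>v\<in>W. list_weight k (L v)) < 1 \<Longrightarrow>
    \<exists>C. (\<forall>v\<in>W. C v \<in> L v) \<and> unique_max_on W E C"
proof (induction "card W" arbitrary: W L rule: less_induct)
  case less
  show ?case
  proof (cases "W = {}")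
    case True
    then show ?thesis by (auto simp: unique_max_on_def)
  next
    case False
    have "list_weight k (L v) < 1" if "v \<in> W" for v
      using member_le_sum[of v W "\<lambda>v. list_weight k (L v)"] that less.prems(1,3)
        list_weight_nonneg[of k] k2 by auto
    then have lists_nonempty: "L v \<noteq> {}" if "v \<in> W" for v
      using that list_weight_empty by force
    define c where "c = (LEAST x. x \<in> (\<Union>v\<in>W. L v))"
    have c_in: "c \<in> (\<Union>v\<in>W. L v)"
      unfolding c_def using False lists_nonempty by (metis LeastI SUP_bot_conv(2) ex_in_conv)
    have c_least: "c \<le> x" if "v \<in> W" "x \<in> L v" for v x
      unfolding c_def using that by (auto intro: Least_le)
    define Vc where "Vc = {v\<in>W. c \<in> L v}"
    have Vc: "finite Vc" "Vc \<noteq> {}" "Vc \<subseteq> W"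
      using c_in less.prems(1) unfolding Vc_def by auto
    obtain P where P: "proper_coloring Vc (induced_edges E Vc) P" "card (P ` Vc) \<le> k"
      using hc Vc(3) less.prems(2) unfolding hereditarily_colorable_def by (meson order_trans)
    obtain j where j: "j \<in> P ` Vc"
      and heavy: "(\<Sum>v\<in>Vc. list_weight k (L v)) \<le> real k * (\<Sum>v\<in>{v\<in>Vc. P v = j}. list_weight k (L v))"
      using heavy_colour_class[OF Vc(1,2) _ P(2), of "\<lambda>v. list_weight k (L v)"]
        list_weight_nonneg[of k] k2 by auto
    define X where "X = {v\<in>Vc. P v = j}"
    have X: "X \<subseteq> Vc" "X \<noteq> {}" using j unfolding X_def by auto
    have smaller: "card (W - X) < card W"
      using X Vc(3) less.prems(1) by (intro psubset_card_mono) auto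
    have "(\<Sum>v\<in>W - X. list_weight k (L v - {c})) < 1"
      using weight_after_colouring_class[OF k2 less.prems(1), of X c L] X(1) heavy less.prems(3)
      unfolding Vc_def X_def by simp
    then obtain C' where C': "\<forall>v\<in>W - X. C' v \<in> L v - {c}" "unique_max_on (W - X) E C'"
      using less.hyps[OF smaller, of "\<lambda>v. L v - {c}"] less.prems(1,2) by auto
    have above: "\<forall>v\<in>W - X. C' v > c"
      using C'(1) c_least by (metis DiffD1 DiffD2 insertI1 le_neq_implies_less)
    have indep: "\<forall>S\<in>E. S \<inter> W \<subseteq> X \<longrightarrow> card (S \<inter> W) \<le> 1"
    proof (intro ballI impI)
      fix S assume "S \<in> E" "S \<inter> W \<subseteq> X"
      moreover from this have "S \<inter> Vc = S \<inter> W" using X(1) Vc(3) by auto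
      ultimately show "card (S \<inter> W) \<le> 1"
        using colour_class_independent[OF P(1), of S j] unfolding X_def by auto
    qed
    define C where "C v = (if v \<in> X then c else C' v)" for v
    have "\<forall>v\<in>W. C v \<in> L v"
      using C'(1) X(1) unfolding C_def Vc_def by auto
    moreover have "unique_max_on W E C"
      unfolding C_def using unique_max_on_extend[OF less.prems(1) _ C'(2) above indep] X(1) Vc(3)
      by blast
    ultimately show ?thesis by blast
  qed
qed

lemma unique_max_coloring_of_unique_max_on:
  assumes "hypergraph V E" "\<forall>v\<in>V. C v > 0" "unique_max_on V E C"
  shows "unique_max_coloring V E C"
proof -
  have "S \<inter> V = S" if "S \<in> E" for S using assms(1) that unfolding hypergraph_def by auto
  then show ?thesis using assms(2,3) unfolding unique_max_coloring_def unique_max_on_def by auto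
qed

theorem theorem3p1:
  fixes k :: nat and V :: "'a set" and E :: "'a set set" and L :: "'a \<Rightarrow> nat set"
  assumes "k \<ge> 2"
    and "hypergraph V E"
    and "hereditarily_colorable k V E"
    and "\<forall>v\<in>V. (\<forall>c\<in>L v. c > 0)"
    and "\<forall>v\<in>V. infinite (L v) \<or> real (card (L v)) > log (real k / (real k - 1)) (real (card V))"
  shows "\<exists>C. unique_max_coloring V E C \<and> (\<forall>v\<in>V. C v \<in> L v)"
proof -
  have finV: "finite V" using assms(2) unfolding hypergraph_def by auto
  have total_weight: "(\<Sum>v\<in>V. list_weight k (L v)) < 1"
  proof (cases "V = {}")
    case False
    then have n_pos: "card V > 0" using finV by auto
    have "(\<Sum>v\<in>V. list_weight k (L v)) < real (card V) * (1 / real (card V))"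
      using sum_bounded_above_strict[of V "\<lambda>v. list_weight k (L v)" "1 / real (card V)"]
        list_weight_less_of_log_bound[OF assms(1) n_pos] assms(5) n_pos by auto
    then show ?thesis using n_pos by simp
  qed simp
  obtain C where "\<forall>v\<in>V. C v \<in> L v" "unique_max_on V E C"
    using unique_max_list_colouring_of_weight[OF assms(1,3) finV subset_refl total_weight] by blast
  then show ?thesis
    using unique_max_coloring_of_unique_max_on[OF assms(2)] assms(4) by blast
qed

end
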